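(* Let $G$ be a connected graph in $\mathcal{C}$ and $C$ an induced $C_5$ in $G$ with vertices $0,\dots,4$ in cyclic order. Then for every $i$ (indices mod 5), there is no edge between $X_i$ and $Y_{i+1}\cup Y_{i+2}\cup Y_{i+4}$.
   Context: $\mathcal{C}=\mathrm{Free}(\text{claw}, 4K_1, \text{5-wheel}, C_5\text{-twin}, P_5\text{-twin}, K_5-e)$, where $\mathrm{Free}(L)$ is the class of graphs with no induced subgraph isomorphic to a member of $L$; the claw is $K_{1,3}$; $4K_1$ is the edgeless graph on 4 vertices; the 5-wheel is $C_5$ plus a vertex adjacent to all five cycle vertices; the $C_5$-twin is $C_5$ plus a new vertex adjacent to one cycle vertex $v$ and both cycle-neighbours of $v$; the $P_5$-twin is a path $p_1p_2p_3p_4p_5$ plus a new vertex adjacent to exactly $p_2,p_3,p_4$; $K_5-e$ is $K_5$ minus one edge. Given an induced cycle $C$ of length 5 with vertices $0,\dots,4$ in cyclic order (indices taken mod 5): $R$ is the set of vertices outside $C$ with no neighbour in $C$; $X_j$ is the set of vertices outside $C$ whose neighbourhood in $C$ is exactly $\{j,j+1\}$; $Y_j$ is the set of vertices outside $C$ whose neighbourhood in $C$ is exactly $\{j,j+1,j+2,j+3\}$; $X=\bigcup_j X_j$, $Y=\bigcup_j Y_j$. *)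

theory Defs
  imports Main
begin

text \<open>Simple graphs: finite vertex set V, symmetric irreflexive adjacency E
  (only adjacencies between vertices of V matter).\<close>
definition graph :: "'a set \<Rightarrow> ('a \<Rightarrow> 'a \<Rightarrow> bool) \<Rightarrow> bool" where
  "graph V E \<longleftrightarrow> finite V \<and> (\<forall>x y. E x y \<longrightarrow> E y x) \<and> (\<forall>x. \<not> E x x)"

definition connected_graph :: "'a set \<Rightarrow> ('a \<Rightarrow> 'a \<Rightarrow> bool) \<Rightarrow> bool" where
  "connected_graph V E \<longleftrightarrow>
     (\<forall>u\<in>V. \<forall>v\<in>V. (\<lambda>x y. x \<in> V \<and> y \<in> V \<and> E x y)\<^sup>*\<^sup>* u v)"

text \<open>Small pattern graphs on vertex set {0..<n}, given by an edge list.\<close>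
definition edges_of :: "(nat \<times> nat) list \<Rightarrow> nat \<Rightarrow> nat \<Rightarrow> bool" where
  "edges_of L i j \<longleftrightarrow> (i, j) \<in> set L \<or> (j, i) \<in> set L"

definition has_induced :: "nat \<Rightarrow> (nat \<Rightarrow> nat \<Rightarrow> bool) \<Rightarrow> 'a set \<Rightarrow> ('a \<Rightarrow> 'a \<Rightarrow> bool) \<Rightarrow> bool" where
  "has_induced n H V E \<longleftrightarrow>
     (\<exists>f. inj_on f {..<n} \<and> f ` {..<n} \<subseteq> V \<and>
          (\<forall>i<n. \<forall>j<n. E (f i) (f j) \<longleftrightarrow> H i j))"

definition claw :: "nat \<Rightarrow> nat \<Rightarrow> bool" where
  "claw = edges_of [(0,1),(0,2),(0,3)]"

definition fourK1 :: "nat \<Rightarrow> nat \<Rightarrow> bool" where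
  "fourK1 = edges_of []"                  (* 4 vertices *)

definition C5_edges :: "(nat \<times> nat) list" where
  "C5_edges = [(0,1),(1,2),(2,3),(3,4),(4,0)]"

definition wheel5 :: "nat \<Rightarrow> nat \<Rightarrow> bool" where
  "wheel5 = edges_of (C5_edges @ [(5,0),(5,1),(5,2),(5,3),(5,4)])"

definition C5_twin :: "nat \<Rightarrow> nat \<Rightarrow> bool" where
  "C5_twin = edges_of (C5_edges @ [(5,4),(5,0),(5,1)])"

definition P5_twin :: "nat \<Rightarrow> nat \<Rightarrow> bool" where
  "P5_twin = edges_of [(0,1),(1,2),(2,3),(3,4),(5,1),(5,2),(5,3)]"

definition K5_minus_e :: "nat \<Rightarrow> nat \<Rightarrow> bool" where
  "K5_minus_e = edges_of [(0,2),(0,3),(0,4),(1,2),(1,3),(1,4),(2,3),(2,4),(3,4)]"  (* 5 vertices, missing 01 *)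

definition in_class_C :: "'a set \<Rightarrow> ('a \<Rightarrow> 'a \<Rightarrow> bool) \<Rightarrow> bool" where
  "in_class_C V E \<longleftrightarrow> graph V E \<and>
     \<not> has_induced 4 claw V E \<and> \<not> has_induced 4 fourK1 V E \<and>
     \<not> has_induced 6 wheel5 V E \<and> \<not> has_induced 6 C5_twin V E \<and>
     \<not> has_induced 6 P5_twin V E \<and> \<not> has_induced 5 K5_minus_e V E"

definition induced_C5 :: "'a set \<Rightarrow> ('a \<Rightarrow> 'a \<Rightarrow> bool) \<Rightarrow> (nat \<Rightarrow> 'a) \<Rightarrow> bool" where
  "induced_C5 V E c \<longleftrightarrow> inj_on c {..<5} \<and> c ` {..<5} \<subseteq> V \<and>
     (\<forall>i<5. \<forall>j<5. E (c i) (c j) \<longleftrightarrow> (j = (i + 1) mod 5 \<or> i = (j + 1) mod 5))"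

definition nbrs_on_C :: "('a \<Rightarrow> 'a \<Rightarrow> bool) \<Rightarrow> (nat \<Rightarrow> 'a) \<Rightarrow> 'a \<Rightarrow> nat set" where
  "nbrs_on_C E c v = {k. k < 5 \<and> E v (c k)}"

definition Xset :: "'a set \<Rightarrow> ('a \<Rightarrow> 'a \<Rightarrow> bool) \<Rightarrow> (nat \<Rightarrow> 'a) \<Rightarrow> nat \<Rightarrow> 'a set" where
  "Xset V E c j = {v \<in> V - c ` {..<5}. nbrs_on_C E c v = {j mod 5, (j + 1) mod 5}}"

definition Yset :: "'a set \<Rightarrow> ('a \<Rightarrow> 'a \<Rightarrow> bool) \<Rightarrow> (nat \<Rightarrow> 'a) \<Rightarrow> nat \<Rightarrow> 'a set" where
  "Yset V E c j = {v \<in> V - c ` {..<5}.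
     nbrs_on_C E c v = {j mod 5, (j + 1) mod 5, (j + 2) mod 5, (j + 3) mod 5}}"

end

theory Submission
  imports Defs
begin

text \<open>The cycle vertices \<open>c (i + 2)\<close> and \<open>c (i + 4)\<close> are non-adjacent, every vertex of
  \<open>Y (i + 1) \<union> Y (i + 2) \<union> Y (i + 4)\<close> misses only one of \<open>c (i + 1)\<close>, \<open>c (i + 3)\<close>,
  \<open>c i\<close> and so sees both of them, while no vertex of \<open>X i\<close> sees either. Hence an edge \<open>xy\<close>
  with \<open>x \<in> X i\<close> and \<open>y\<close> in that union makes \<open>y\<close> the centre of a claw.\<close>

lemma nat_mod5_induct:
  fixes i :: nat
  assumes "\<And>q. P (5 * q)" "\<And>q. P (5 * q + 1)" "\<And>q. P (5 * q + 2)" "\<And>q. P (5 * q + 3)"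
    "\<And>q. P (5 * q + 4)"
  shows "P i"
proof -
  have "i = 5 * (i div 5) + i mod 5" by simp
  moreover have "i mod 5 \<in> {0, 1, 2, 3, 4}" by auto
  ultimately show ?thesis
    using assms by (metis empty_iff insert_iff add_0_right)
qed

lemma mod5_four_consecutive:
  fixes j :: nat
  shows "{j mod 5, (j + 1) mod 5, (j + 2) mod 5, (j + 3) mod 5} = {..<5} - {(j + 4) mod 5}"
  by (induction j rule: nat_mod5_induct) (auto simp: mod_Suc)

lemma mod5_plus_two_plus_four:
  fixes i :: nat
  shows "(i + 2) mod 5 \<notin> {i mod 5, (i + 1) mod 5}" "(i + 4) mod 5 \<notin> {i mod 5, (i + 1) mod 5}"
    and "(i + 2) mod 5 \<noteq> (i + 4) mod 5"
    and "(i + 4) mod 5 \<noteq> ((i + 2) mod 5 + 1) mod 5" "(i + 2) mod 5 \<noteq> ((i + 4) mod 5 + 1) mod 5"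
  by (induction i rule: nat_mod5_induct; simp add: mod_Suc)+

lemma mod5_plus_two_plus_four_not_missed:
  fixes i j :: nat
  assumes "j \<in> {i + 1, i + 2, i + 4}"
  shows "(j + 4) mod 5 \<notin> {(i + 2) mod 5, (i + 4) mod 5}"
  using assms by (induction i rule: nat_mod5_induct) (auto simp: mod_Suc)

lemma has_induced_clawI:
  assumes "graph V E" and "y \<in> V" "x \<in> V" "p \<in> V" "q \<in> V"
    and "E y x" "E y p" "E y q" "\<not> E x p" "\<not> E x q" "\<not> E p q"
    and "x \<noteq> p" "x \<noteq> q" "p \<noteq> q"
  shows "has_induced 4 claw V E"
proof -
  have irrefl: "\<And>u. \<not> E u u"
    using assms(1) unfolding graph_def by blast
  have reversed: "E x y" "E p y" "E q y" "\<not> E p x" "\<not> E q x" "\<not> E q p"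
    using assms(1,6-11) unfolding graph_def by blast+
  have "y \<noteq> x" "y \<noteq> p" "y \<noteq> q"
    using assms(6-8) irrefl by fastforce+
  define f where "f = (\<lambda>n::nat. if n = 0 then y else if n = 1 then x else if n = 2 then p else q)"
  have four: "{..<4::nat} = {0, 1, 2, 3}" by auto
  have "inj_on f {..<4}"
    unfolding four f_def inj_on_def using assms(12-14) \<open>y \<noteq> x\<close> \<open>y \<noteq> p\<close> \<open>y \<noteq> q\<close> by auto
  moreover have "f ` {..<4} \<subseteq> V"
    unfolding four f_def using assms(2-5) by auto
  moreover have "E (f k) (f l) \<longleftrightarrow> claw k l" if "k < 4" "l < 4" for k l
  proof -
    have "k \<in> {0, 1, 2, 3}" "l \<in> {0, 1, 2, 3}" using that by auto
    then show ?thesis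
      unfolding f_def claw_def edges_of_def using assms(6-11) reversed irrefl by auto
  qed
  ultimately show ?thesis
    unfolding has_induced_def by blast
qed

lemma induced_C5_adj_iff:
  assumes "induced_C5 V E c" "k < 5" "l < 5"
  shows "E (c k) (c l) \<longleftrightarrow> l = (k + 1) mod 5 \<or> k = (l + 1) mod 5"
  using assms unfolding induced_C5_def by blast

lemma Xset_adj_cycle_iff:
  assumes "x \<in> Xset V E c j" "k < 5"
  shows "E x (c k) \<longleftrightarrow> k = j mod 5 \<or> k = (j + 1) mod 5"
proof -
  have "nbrs_on_C E c x = {j mod 5, (j + 1) mod 5}"
    using assms(1) unfolding Xset_def by blast
  then show ?thesis
    using assms(2) unfolding nbrs_on_C_def set_eq_iff by auto
qed

lemma Yset_adj_cycle_iff: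
  assumes "y \<in> Yset V E c j" "k < 5"
  shows "E y (c k) \<longleftrightarrow> k \<noteq> (j + 4) mod 5"
proof -
  have "nbrs_on_C E c y = {..<5} - {(j + 4) mod 5}"
    using assms(1) unfolding Yset_def mod5_four_consecutive by blast
  then show ?thesis
    using assms(2) unfolding nbrs_on_C_def set_eq_iff by auto
qed

theorem claim8:
  fixes V :: "'a set" and E :: "'a \<Rightarrow> 'a \<Rightarrow> bool" and c :: "nat \<Rightarrow> 'a"
  assumes "in_class_C V E" and "connected_graph V E" and "induced_C5 V E c"
  shows "\<forall>i. \<forall>x \<in> Xset V E c i.
           \<forall>y \<in> Yset V E c (i + 1) \<union> Yset V E c (i + 2) \<union> Yset V E c (i + 4).
             \<not> E x y"
proof (intro allI ballI notI)
  fix i x y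
  assume x: "x \<in> Xset V E c i" and "E x y"
    and "y \<in> Yset V E c (i + 1) \<union> Yset V E c (i + 2) \<union> Yset V E c (i + 4)"
  then obtain j where j: "j \<in> {i + 1, i + 2, i + 4}" and y: "y \<in> Yset V E c j"
    by blast
  have graph: "graph V E" and claw_free: "\<not> has_induced 4 claw V E"
    using assms(1) unfolding in_class_C_def by auto
  define a where "a = (i + 2) mod 5"
  define b where "b = (i + 4) mod 5"
  have ab: "a < 5" "b < 5"
    unfolding a_def b_def by simp_all
  note arith = mod5_plus_two_plus_four[of i, folded a_def b_def]
    mod5_plus_two_plus_four_not_missed[OF j, folded a_def b_def]
  have "\<not> E x (c a)" "\<not> E x (c b)"
    using Xset_adj_cycle_iff[OF x ab(1)] Xset_adj_cycle_iff[OF x ab(2)] arith by auto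
  moreover have "E y (c a)" "E y (c b)"
    using Yset_adj_cycle_iff[OF y ab(1)] Yset_adj_cycle_iff[OF y ab(2)] arith by auto
  moreover have "\<not> E (c a) (c b)"
    using induced_C5_adj_iff[OF assms(3) ab] arith by auto
  moreover have "E y x"
    using graph \<open>E x y\<close> unfolding graph_def by blast
  moreover have "x \<in> V" "x \<noteq> c a" "x \<noteq> c b"
    using x ab unfolding Xset_def by auto
  moreover have "y \<in> V"
    using y unfolding Yset_def by auto
  moreover have "c a \<in> V" "c b \<in> V" "c a \<noteq> c b"
    using assms(3) ab arith(3) unfolding induced_C5_def inj_on_def by auto
  ultimately have "has_induced 4 claw V E"
    by (blast intro: has_induced_clawI[OF graph])
  with claw_free show False ..
qed

end
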